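(* Let $k$ be an algebraically closed field of characteristic $2$, $S=\mathbf{V}(g)\subset\mathbb{A}^3$ with $g = x^2+y^2z+yz^2+xyz$, and $m\ge 5$. Let $R_m = k[x_0,\dots,x_m,y_0,\dots,y_m,z_0,\dots,z_m]$, $(\mathbb{A}^3)_m=\mathrm{Spec}\,R_m$, and define $g^{(j)}\in R_m$ by $g(\sum_{i=0}^m x_it^i,\sum_{i=0}^m y_it^i,\sum_{i=0}^m z_it^i)=\sum_{j=0}^m g^{(j)}t^j$ in $R_m[t]/\langle t^{m+1}\rangle$. Let $S_m^0=\mathbf{V}(x_0,y_0,z_0,g^{(0)},\dots,g^{(m)})$ be the singular fiber of the $m$-th jet scheme of $S$. Define $I_m^0 = \langle x_0,x_1,x_2,y_0,y_1,z_0,z_1\rangle + \langle g^{(0)},\dots,g^{(m)}\rangle$, $I_m^1 = J_m^1 (R_m)_{z_1}\cap R_m$, $I_m^2 = J_m^2 (R_m)_{y_1}\cap R_m$, $I_m^3 = J_m^3 (R_m)_{y_1}\cap R_m$, where $J_m^1 = \langle x_0,x_1,y_0,y_1,z_0\rangle + \langle g^{(0)},\dots,g^{(m)}\rangle$, $J_m^2 = \langle x_0,x_1,y_0,z_0,z_1\rangle + \langle g^{(0)},\dots,g^{(m)}\rangle$, $J_m^3 = \langle x_0,x_1,y_0,z_0,y_1+z_1\rangle + \langle g^{(0)},\dots,g^{(m)}\rangle$, and $Z_m^i=\mathbf{V}(I_m^i)$ for $i=0,1,2,3$ (these are the irreducible components of $S_m^0$). Then the maximal elements of $\{Z_m^i\cap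 Z_m^j\mid i,j\in\{0,1,2,3\},\ i\ne j\}$ with respect to inclusion are $Z_m^0\cap Z_m^1$, $Z_m^0\cap Z_m^2$ and $Z_m^0\cap Z_m^3$, and they are pairwise distinct. In particular, $Z_m^1\cap Z_m^2,\ Z_m^2\cap Z_m^3,\ Z_m^3\cap Z_m^1\subsetneq Z_m^0$.
   Context: $(R_m)_h$ is the localization at powers of $h$, $J(R_m)_h\cap R_m$ the preimage in $R_m$ of the extended ideal, and $\mathbf{V}(\cdot)$ the zero set in $(\mathbb{A}^3)_m$. *)

theory Defs
  imports "HOL-Library.Poly_Mapping" "HOL-Computational_Algebra.Polynomial"
begin

datatype var = X nat | Y nat | Z nat

fun var_index :: "var \<Rightarrow> nat" where
  "var_index (X i) = i" | "var_index (Y i) = i" | "var_index (Z i) = i"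

type_synonym 'k mpoly = "(var \<Rightarrow>\<^sub>0 nat) \<Rightarrow>\<^sub>0 'k"

definition Var :: "var \<Rightarrow> 'k::comm_ring_1 mpoly" where
  "Var v = Poly_Mapping.single (Poly_Mapping.single v 1) 1"

definition vars :: "'k::zero mpoly \<Rightarrow> var set" where
  "vars p = (\<Union>mo\<in>Poly_Mapping.keys p. Poly_Mapping.keys mo)"

definition Rm :: "nat \<Rightarrow> 'k::zero mpoly set" where
  "Rm m = {p. \<forall>v\<in>vars p. var_index v \<le> m}"

definition eval :: "'k::comm_ring_1 mpoly \<Rightarrow> (var \<Rightarrow> 'k) \<Rightarrow> 'k" where
  "eval p a = (\<Sum>mo\<in>Poly_Mapping.keys p.
      Poly_Mapping.lookup p mo * (\<Prod>v\<in>Poly_Mapping.keys mo. a v ^ Poly_Mapping.lookup mo v))"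

text \<open>k-points of (A^3)_m: coordinates indexed by variables of R_m (others set to 0).\<close>
definition points :: "nat \<Rightarrow> (var \<Rightarrow> 'k::zero) set" where
  "points m = {a. \<forall>v. m < var_index v \<longrightarrow> a v = 0}"

definition ideal_gen :: "nat \<Rightarrow> 'k::comm_ring_1 mpoly set \<Rightarrow> 'k mpoly set" where
  "ideal_gen m S = {(\<Sum>s\<in>F. c s * s) | F c. finite F \<and> F \<subseteq> S \<and> (\<forall>s. c s \<in> Rm m)}"

text \<open>J (R_m)_h \<inter> R_m, i.e. the saturation of J with respect to h
  (x/1 \<in> J (R_m)_h iff h^n x \<in> J for some n).\<close>
definition saturate :: "nat \<Rightarrow> 'k::comm_ring_1 mpoly set \<Rightarrow> 'k mpoly \<Rightarrow> 'k mpoly set" where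
  "saturate m J h = {p \<in> Rm m. \<exists>n. h ^ n * p \<in> J}"

definition zero_set :: "nat \<Rightarrow> 'k::comm_ring_1 mpoly set \<Rightarrow> (var \<Rightarrow> 'k) set" where
  "zero_set m I = {a \<in> points m. \<forall>p\<in>I. eval p a = 0}"

definition gfun :: "'a::comm_ring_1 \<Rightarrow> 'a \<Rightarrow> 'a \<Rightarrow> 'a" where
  "gfun x y z = x^2 + y^2 * z + y * z^2 + x * y * z"

definition arc :: "(nat \<Rightarrow> var) \<Rightarrow> nat \<Rightarrow> 'k::comm_ring_1 mpoly poly" where
  "arc V m = (\<Sum>i\<le>m. monom (Var (V i)) i)"

text \<open>g^{(j)}: coefficient of t^j of g(x(t),y(t),z(t)); for j \<le> m this equals the
  coefficient in R_m[t]/(t^{m+1}).\<close>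
definition gj :: "nat \<Rightarrow> nat \<Rightarrow> 'k::comm_ring_1 mpoly" where
  "gj m j = coeff (gfun (arc X m) (arc Y m) (arc Z m)) j"

definition gens_g :: "nat \<Rightarrow> 'k::comm_ring_1 mpoly set" where
  "gens_g m = {gj m j | j. j \<le> m}"

definition I0 :: "nat \<Rightarrow> 'k::comm_ring_1 mpoly set" where
  "I0 m = ideal_gen m ({Var (X 0), Var (X 1), Var (X 2), Var (Y 0), Var (Y 1), Var (Z 0), Var (Z 1)}
            \<union> gens_g m)"

definition J1 :: "nat \<Rightarrow> 'k::comm_ring_1 mpoly set" where
  "J1 m = ideal_gen m ({Var (X 0), Var (X 1), Var (Y 0), Var (Y 1), Var (Z 0)} \<union> gens_g m)"

definition J2 :: "nat \<Rightarrow> 'k::comm_ring_1 mpoly set" where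
  "J2 m = ideal_gen m ({Var (X 0), Var (X 1), Var (Y 0), Var (Z 0), Var (Z 1)} \<union> gens_g m)"

definition J3 :: "nat \<Rightarrow> 'k::comm_ring_1 mpoly set" where
  "J3 m = ideal_gen m ({Var (X 0), Var (X 1), Var (Y 0), Var (Z 0), Var (Y 1) + Var (Z 1)} \<union> gens_g m)"

definition Iset :: "nat \<Rightarrow> nat \<Rightarrow> 'k::comm_ring_1 mpoly set" where
  "Iset m i = (if i = 0 then I0 m
               else if i = 1 then saturate m (J1 m) (Var (Z 1))
               else if i = 2 then saturate m (J2 m) (Var (Y 1))
               else saturate m (J3 m) (Var (Y 1)))"

definition Zc :: "nat \<Rightarrow> nat \<Rightarrow> (var \<Rightarrow> 'k::comm_ring_1) set" where
  "Zc m i = zero_set m (Iset m i)"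

definition maximal_elements :: "'a set set \<Rightarrow> 'a set set" where
  "maximal_elements \<S> = {A \<in> \<S>. \<forall>B\<in>\<S>. A \<subseteq> B \<longrightarrow> A = B}"

definition alg_closed :: "'k::field itself \<Rightarrow> bool" where
  "alg_closed _ \<longleftrightarrow> (\<forall>p :: 'k poly. 0 < degree p \<longrightarrow> (\<exists>x. poly p x = 0))"

end

theory Submission
  imports Defs
begin

text \<open>
  On \<open>Z\<^sup>i \<inter> Z\<^sup>j\<close> (\<open>1 \<le> i < j \<le> 3\<close>) the coordinates \<open>x\<^sub>0, x\<^sub>1, y\<^sub>0, y\<^sub>1, z\<^sub>0, z\<^sub>1\<close> vanish, and then
  \<open>g\<^sup>(\<^sup>4\<^sup>) = x\<^sub>2\<^sup>2\<close>, so the point lies in \<open>Z\<^sup>0\<close>. The three intersections \<open>Z\<^sup>0 \<inter> Z\<^sup>i\<close> are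
  separated by the jets of the arcs \<open>(0, b t\<^sup>2, c t\<^sup>2)\<close> with \<open>(b, c) = (0, 1), (1, 0), (1, 1)\<close>.
  Each lies on \<open>Z\<^sup>i\<close> as the limit \<open>s \<rightarrow> 0\<close> of the arcs \<open>(0, b (s t + t\<^sup>2), c (s t + t\<^sup>2))\<close>, which
  lie on \<open>\<^bold>V(J\<^sup>i)\<close> and off \<open>h\<^sub>i = 0\<close> for \<open>s \<noteq> 0\<close>. It avoids the other two components:
  modulo \<open>J\<^sup>j\<close> the generic arcs reduce to arcs of positive \<open>t\<close>-order along which, in
  characteristic \<open>2\<close>, the \<open>t\<^sup>5\<close>-coefficient of \<open>g\<close> is \<open>h\<^sub>j q\<^sub>j\<close> for an explicit quadratic \<open>q\<^sub>j\<close>;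
  hence \<open>q\<^sub>j \<in> I\<^sup>j\<close>, and \<open>q\<^sub>j\<close> does not vanish at the point.
\<close>

section \<open>Evaluation at a point is a ring homomorphism\<close>

definition monomial_value :: "(var \<Rightarrow>\<^sub>0 nat) \<Rightarrow> (var \<Rightarrow> 'k::comm_ring_1) \<Rightarrow> 'k" where
  "monomial_value mo a = (\<Prod>v\<in>Poly_Mapping.keys mo. a v ^ Poly_Mapping.lookup mo v)"

lemma monomial_value_superset:
  "finite S \<Longrightarrow> Poly_Mapping.keys mo \<subseteq> S \<Longrightarrow>
    monomial_value mo a = (\<Prod>v\<in>S. a v ^ Poly_Mapping.lookup mo v)"
  unfolding monomial_value_def by (rule prod.mono_neutral_left) (auto simp: in_keys_iff)

lemma monomial_value_add: "monomial_value (k + l) a = monomial_value k a * monomial_value l a"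
proof -
  let ?S = "Poly_Mapping.keys k \<union> Poly_Mapping.keys l"
  have "monomial_value (k + l) a = (\<Prod>v\<in>?S. a v ^ Poly_Mapping.lookup (k + l) v)"
    by (rule monomial_value_superset) (auto dest: set_mp[OF keys_add])
  also have "\<dots> = (\<Prod>v\<in>?S. a v ^ Poly_Mapping.lookup k v) * (\<Prod>v\<in>?S. a v ^ Poly_Mapping.lookup l v)"
    by (simp add: lookup_add power_add prod.distrib)
  also have "\<dots> = monomial_value k a * monomial_value l a"
    by (subst (1 2) monomial_value_superset[of ?S]) auto
  finally show ?thesis .
qed

lemma eval_superset:
  "finite S \<Longrightarrow> Poly_Mapping.keys p \<subseteq> S \<Longrightarrow>
    eval p a = (\<Sum>mo\<in>S. Poly_Mapping.lookup p mo * monomial_value mo a)"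
  unfolding eval_def monomial_value_def[symmetric]
  by (rule sum.mono_neutral_left) (auto simp: in_keys_iff)

lemma eval_add: "eval (p + q) a = eval p a + eval q a"
proof -
  let ?S = "Poly_Mapping.keys p \<union> Poly_Mapping.keys q"
  have "eval (p + q) a = (\<Sum>mo\<in>?S. Poly_Mapping.lookup (p + q) mo * monomial_value mo a)"
    by (rule eval_superset) (auto dest: set_mp[OF keys_add])
  also have "\<dots> = eval p a + eval q a"
    by (subst (1 2) eval_superset[of ?S]) (auto simp: lookup_add distrib_right sum.distrib)
  finally show ?thesis .
qed

lemma eval_zero [simp]: "eval 0 a = 0"
  by (simp add: eval_def)

lemma eval_sum: "eval (sum f F) a = (\<Sum>x\<in>F. eval (f x) a)"
  by (induction F rule: infinite_finite_induct) (auto simp: eval_add)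

lemma eval_single [simp]: "eval (Poly_Mapping.single mo c) a = c * monomial_value mo a"
  by (cases "c = 0") (simp_all add: eval_def monomial_value_def)

lemma poly_mapping_sum_single:
  "p = (\<Sum>k\<in>Poly_Mapping.keys p. Poly_Mapping.single k (Poly_Mapping.lookup p k))"
  by (rule poly_mapping_eqI)
    (auto simp: lookup_sum lookup_single when_def in_keys_iff intro: sum.neutral split: if_splits)

lemma eval_mult: "eval (p * q) a = eval p a * eval q a"
proof -
  let ?c = "Poly_Mapping.lookup"
  have "p * q = (\<Sum>k\<in>Poly_Mapping.keys p. Poly_Mapping.single k (?c p k)) *
      (\<Sum>l\<in>Poly_Mapping.keys q. Poly_Mapping.single l (?c q l))"
    by (simp only: poly_mapping_sum_single[symmetric])
  also have "\<dots> = (\<Sum>k\<in>Poly_Mapping.keys p. \<Sum>l\<in>Poly_Mapping.keys q.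
      Poly_Mapping.single k (?c p k) * Poly_Mapping.single l (?c q l))"
    by (simp add: sum_distrib_left sum_distrib_right sum.swap[of _ "Poly_Mapping.keys q"])
  finally have "eval (p * q) a = (\<Sum>k\<in>Poly_Mapping.keys p. \<Sum>l\<in>Poly_Mapping.keys q.
      ?c p k * monomial_value k a * (?c q l * monomial_value l a))"
    by (simp add: eval_sum mult_single monomial_value_add mult_ac)
  also have "\<dots> = eval p a * eval q a"
    by (simp add: eval_def monomial_value_def[symmetric] sum_product)
  finally show ?thesis .
qed

lemma eval_one [simp]: "eval 1 a = 1"
  by (simp add: eval_def)

lemma eval_uminus: "eval (- p) a = - eval p a"
  using eval_add[of p "- p" a] by (simp add: add_eq_0_iff2)

lemma eval_diff: "eval (p - q) a = eval p a - eval q a"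
  using eval_add[of p "- q" a] by (simp add: eval_uminus)

lemma eval_power: "eval (p ^ n) a = eval p a ^ n"
  by (induction n) (simp_all add: eval_mult)

lemma eval_Var [simp]: "eval (Var v) a = a v"
  by (simp add: Var_def monomial_value_def)

lemma map_poly_eval_add:
  "map_poly (\<lambda>p. eval p a) (P + Q) = map_poly (\<lambda>p. eval p a) P + map_poly (\<lambda>p. eval p a) Q"
  by (rule poly_eqI) (simp add: coeff_map_poly eval_add)

lemma map_poly_eval_mult:
  "map_poly (\<lambda>p. eval p a) (P * Q) = map_poly (\<lambda>p. eval p a) P * map_poly (\<lambda>p. eval p a) Q"
  by (rule poly_eqI) (simp add: coeff_map_poly coeff_mult eval_sum eval_mult)

lemma map_poly_eval_power:
  "map_poly (\<lambda>p. eval p a) (P ^ n) = map_poly (\<lambda>p. eval p a) P ^ n"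
  by (induction n) (simp_all add: map_poly_eval_mult)

lemma map_poly_eval_gfun:
  "map_poly (\<lambda>p. eval p a) (gfun P Q R) =
    gfun (map_poly (\<lambda>p. eval p a) P) (map_poly (\<lambda>p. eval p a) Q) (map_poly (\<lambda>p. eval p a) R)"
  by (simp add: gfun_def map_poly_eval_add map_poly_eval_mult map_poly_eval_power)

lemma map_poly_eval_arc: "map_poly (\<lambda>p. eval p a) (arc V m) = (\<Sum>i\<le>m. monom (a (V i)) i)"
proof -
  have "map_poly (\<lambda>p. eval p a) (\<Sum>i\<le>m. monom (Var (V i)) i) =
      (\<Sum>i\<le>m. map_poly (\<lambda>p. eval p a) (monom (Var (V i)) i))"
    by (induction m) (simp_all add: map_poly_eval_add)
  then show ?thesis by (simp add: arc_def map_poly_monom)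
qed

lemma eval_gj:
  "eval (gj m j) a =
    coeff (gfun (\<Sum>i\<le>m. monom (a (X i)) i) (\<Sum>i\<le>m. monom (a (Y i)) i) (\<Sum>i\<le>m. monom (a (Z i)) i)) j"
  by (simp add: gj_def flip: coeff_map_poly[of "\<lambda>p. eval p a", simplified] map_poly_eval_arc map_poly_eval_gfun)

section \<open>The subring \<open>R\<^sub>m\<close> and its ideals\<close>

lemma vars_add: "vars (p + q) \<subseteq> vars p \<union> vars q"
  unfolding vars_def using keys_add by fastforce

lemma vars_diff: "vars (p - q) \<subseteq> vars p \<union> vars q"
  unfolding vars_def using keys_diff by fastforce

lemma vars_mult: "vars ((p :: 'k::comm_ring_1 mpoly) * q) \<subseteq> vars p \<union> vars q"
proof
  fix v assume "v \<in> vars (p * q)"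
  then obtain mo where mo: "mo \<in> Poly_Mapping.keys (p * q)" "v \<in> Poly_Mapping.keys mo"
    unfolding vars_def by auto
  then obtain k l where "mo = k + l" "k \<in> Poly_Mapping.keys p" "l \<in> Poly_Mapping.keys q"
    using keys_mult by blast
  with mo(2) show "v \<in> vars p \<union> vars q"
    unfolding vars_def using keys_add by fastforce
qed

lemma Rm_add: "p \<in> Rm m \<Longrightarrow> q \<in> Rm m \<Longrightarrow> p + q \<in> Rm m"
  unfolding Rm_def using vars_add by blast

lemma Rm_diff: "p \<in> Rm m \<Longrightarrow> q \<in> Rm m \<Longrightarrow> p - q \<in> Rm m"
  unfolding Rm_def using vars_diff by blast

lemma Rm_mult: "p \<in> Rm m \<Longrightarrow> q \<in> Rm m \<Longrightarrow> (p :: 'k::comm_ring_1 mpoly) * q \<in> Rm m"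
  unfolding Rm_def using vars_mult by blast

lemma Rm_zero [simp]: "0 \<in> Rm m"
  by (simp add: Rm_def vars_def)

lemma Rm_one [simp]: "(1 :: 'k::comm_ring_1 mpoly) \<in> Rm m"
  by (simp add: Rm_def vars_def)

lemma Rm_Var: "var_index v \<le> m \<Longrightarrow> (Var v :: 'k::comm_ring_1 mpoly) \<in> Rm m"
  by (simp add: Rm_def vars_def Var_def)

lemma Rm_sum: "(\<And>x. x \<in> F \<Longrightarrow> f x \<in> Rm m) \<Longrightarrow> sum f F \<in> Rm m"
  by (induction F rule: infinite_finite_induct) (auto intro: Rm_add)

lemma ideal_gen_zero: "0 \<in> ideal_gen m S"
  unfolding ideal_gen_def by (intro CollectI exI[of _ "{}"] exI[of _ "\<lambda>_. 0"]) simp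

lemma ideal_gen_gen: "s \<in> S \<Longrightarrow> (s :: 'k::comm_ring_1 mpoly) \<in> ideal_gen m S"
  unfolding ideal_gen_def by (intro CollectI exI[of _ "{s}"] exI[of _ "\<lambda>_. 1"]) simp

lemma ideal_gen_add:
  assumes "p \<in> ideal_gen m S" "q \<in> ideal_gen m S"
  shows "(p :: 'k::comm_ring_1 mpoly) + q \<in> ideal_gen m S"
proof -
  obtain F c where p: "p = (\<Sum>s\<in>F. c s * s)" "finite F" "F \<subseteq> S" "\<forall>s. c s \<in> Rm m"
    using assms(1) unfolding ideal_gen_def by blast
  obtain G d where q: "q = (\<Sum>s\<in>G. d s * s)" "finite G" "G \<subseteq> S" "\<forall>s. d s \<in> Rm m"
    using assms(2) unfolding ideal_gen_def by blast
  define e where "e s = (if s \<in> F then c s else 0) + (if s \<in> G then d s else 0)" for s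
  have "p = (\<Sum>s\<in>F \<union> G. (if s \<in> F then c s else 0) * s)"
    unfolding p(1) using p(2) q(2) by (intro sum.mono_neutral_cong_left) auto
  moreover have "q = (\<Sum>s\<in>F \<union> G. (if s \<in> G then d s else 0) * s)"
    unfolding q(1) using p(2) q(2) by (intro sum.mono_neutral_cong_left) auto
  ultimately have "p + q = (\<Sum>s\<in>F \<union> G. e s * s)"
    by (simp add: e_def sum.distrib distrib_right)
  moreover have "\<forall>s. e s \<in> Rm m"
    using p(4) q(4) by (auto simp: e_def intro: Rm_add)
  ultimately show ?thesis
    unfolding ideal_gen_def using p q by blast
qed

lemma ideal_gen_mult:
  assumes "p \<in> ideal_gen m S" "r \<in> Rm m"
  shows "r * (p :: 'k::comm_ring_1 mpoly) \<in> ideal_gen m S"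
proof -
  obtain F c where p: "p = (\<Sum>s\<in>F. c s * s)" "finite F" "F \<subseteq> S" "\<forall>s. c s \<in> Rm m"
    using assms(1) unfolding ideal_gen_def by blast
  have "r * p = (\<Sum>s\<in>F. (r * c s) * s)"
    by (simp add: p(1) sum_distrib_left mult.assoc)
  moreover have "\<forall>s. r * c s \<in> Rm m"
    using p(4) assms(2) by (auto intro: Rm_mult)
  ultimately show ?thesis
    unfolding ideal_gen_def using p by (intro CollectI exI[of _ F] exI[of _ "\<lambda>s. r * c s"]) auto
qed

lemma ideal_gen_diff:
  assumes "p \<in> ideal_gen m S" "q \<in> ideal_gen m S"
  shows "(p :: 'k::comm_ring_1 mpoly) - q \<in> ideal_gen m S"
proof -
  have "- 1 \<in> (Rm m :: 'k mpoly set)"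
    using Rm_diff[of "0 :: 'k mpoly" m 1] by simp
  then show ?thesis
    using assms ideal_gen_add[of p m S "(- 1) * q"] ideal_gen_mult[of q m S "- 1"] by simp
qed

lemma ideal_gen_sum:
  "(\<And>x. x \<in> F \<Longrightarrow> f x \<in> ideal_gen m S) \<Longrightarrow> (sum f F :: 'k::comm_ring_1 mpoly) \<in> ideal_gen m S"
  by (induction F rule: infinite_finite_induct) (auto intro: ideal_gen_add ideal_gen_zero)

lemma ideal_gen_subset_Rm: "S \<subseteq> Rm m \<Longrightarrow> ideal_gen m S \<subseteq> (Rm m :: 'k::comm_ring_1 mpoly set)"
  unfolding ideal_gen_def by (auto intro!: Rm_sum Rm_mult)

lemma eval_ideal_gen:
  assumes "p \<in> ideal_gen m S" "\<And>s. s \<in> S \<Longrightarrow> eval s a = 0"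
  shows "eval (p :: 'k::comm_ring_1 mpoly) a = 0"
proof -
  obtain F c where "p = (\<Sum>s\<in>F. c s * s)" "F \<subseteq> S"
    using assms(1) unfolding ideal_gen_def by blast
  then show ?thesis
    using assms(2) by (auto simp: eval_sum eval_mult intro!: sum.neutral)
qed

lemma mem_zero_set_ideal_gen:
  "a \<in> zero_set m (ideal_gen m S) \<longleftrightarrow> a \<in> points m \<and> (\<forall>s\<in>S. eval s a = (0 :: 'k::comm_ring_1))"
  unfolding zero_set_def by (auto intro: ideal_gen_gen eval_ideal_gen)

lemma zero_set_saturate_subset:
  assumes "S \<subseteq> Rm m"
  shows "zero_set m (saturate m (ideal_gen m S) h) \<subseteq> zero_set m (ideal_gen m (S :: 'k::comm_ring_1 mpoly set))"
proof -
  have "ideal_gen m S \<subseteq> saturate m (ideal_gen m S) h"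
    using ideal_gen_subset_Rm[OF assms] unfolding saturate_def
    by (auto intro: exI[of _ 0])
  then show ?thesis
    unfolding zero_set_def by blast
qed

lemma Zc_eq:
  "Zc m 0 = zero_set m (I0 m)"
  "Zc m 1 = zero_set m (saturate m (J1 m) (Var (Z 1)))"
  "Zc m 2 = zero_set m (saturate m (J2 m) (Var (Y 1)))"
  "Zc m 3 = zero_set m (saturate m (J3 m) (Var (Y 1)))"
  by (simp_all add: Zc_def Iset_def)

section \<open>Arcs with coefficients in \<open>R\<^sub>m\<close>, modulo an ideal\<close>

definition Rm_poly :: "nat \<Rightarrow> 'k::comm_ring_1 mpoly poly set" where
  "Rm_poly m = {P. \<forall>n. coeff P n \<in> Rm m}"

definition ideal_poly :: "nat \<Rightarrow> 'k::comm_ring_1 mpoly set \<Rightarrow> 'k mpoly poly set" where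
  "ideal_poly m S = {P. \<forall>n. coeff P n \<in> ideal_gen m S}"

lemma Rm_poly_add: "P \<in> Rm_poly m \<Longrightarrow> Q \<in> Rm_poly m \<Longrightarrow> P + Q \<in> Rm_poly m"
  by (auto simp: Rm_poly_def intro: Rm_add)

lemma Rm_poly_diff: "P \<in> Rm_poly m \<Longrightarrow> Q \<in> Rm_poly m \<Longrightarrow> P - Q \<in> Rm_poly m"
  by (auto simp: Rm_poly_def intro: Rm_diff)

lemma Rm_poly_mult: "P \<in> Rm_poly m \<Longrightarrow> Q \<in> Rm_poly m \<Longrightarrow> P * Q \<in> Rm_poly m"
  by (auto simp: Rm_poly_def coeff_mult intro!: Rm_sum Rm_mult)

lemma Rm_poly_one: "1 \<in> Rm_poly m"
  by (simp add: Rm_poly_def coeff_1)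

lemma Rm_poly_power: "P \<in> Rm_poly m \<Longrightarrow> P ^ n \<in> Rm_poly m"
  by (induction n) (simp_all add: Rm_poly_mult Rm_poly_one)

lemma Rm_poly_gfun: "P \<in> Rm_poly m \<Longrightarrow> Q \<in> Rm_poly m \<Longrightarrow> R \<in> Rm_poly m \<Longrightarrow> gfun P Q R \<in> Rm_poly m"
  unfolding gfun_def by (intro Rm_poly_add Rm_poly_mult Rm_poly_power)

lemma Rm_poly_monom: "c \<in> Rm m \<Longrightarrow> monom c d \<in> Rm_poly m"
  by (simp add: Rm_poly_def coeff_monom)

lemma Rm_poly_monom_sum: "(\<And>i. i \<le> n \<Longrightarrow> c i \<in> Rm m) \<Longrightarrow> (\<Sum>i\<le>n. monom (c i) i) \<in> Rm_poly m"
  by (auto simp: Rm_poly_def coeff_sum intro!: Rm_sum)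

lemma arc_in_Rm_poly: "V \<in> {X, Y, Z} \<Longrightarrow> (arc V m :: 'k::comm_ring_1 mpoly poly) \<in> Rm_poly m"
  unfolding arc_def by (auto intro!: Rm_poly_monom_sum Rm_Var)

lemma gj_in_Rm: "(gj m j :: 'k::comm_ring_1 mpoly) \<in> Rm m"
proof -
  have "gfun (arc X m) (arc Y m) (arc Z m) \<in> (Rm_poly m :: 'k mpoly poly set)"
    by (intro Rm_poly_gfun arc_in_Rm_poly) auto
  then show ?thesis
    by (simp add: gj_def Rm_poly_def)
qed

lemma ideal_poly_add: "P \<in> ideal_poly m S \<Longrightarrow> Q \<in> ideal_poly m S \<Longrightarrow> P + Q \<in> ideal_poly m S"
  by (auto simp: ideal_poly_def intro: ideal_gen_add)

lemma ideal_poly_mult: "P \<in> ideal_poly m S \<Longrightarrow> Q \<in> Rm_poly m \<Longrightarrow> P * Q \<in> ideal_poly m S"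
  by (auto simp: ideal_poly_def Rm_poly_def coeff_mult mult.commute[of "coeff P _"]
      intro!: ideal_gen_sum ideal_gen_mult)

lemma ideal_poly_monom_sum:
  "(\<And>i. i < d \<Longrightarrow> c i \<in> ideal_gen m S) \<Longrightarrow> (\<Sum>i<d. monom (c i) i) \<in> ideal_poly m S"
  by (auto simp: ideal_poly_def coeff_sum ideal_gen_zero)

lemma gfun_diff:
  "gfun P Q R - gfun P' Q' R' =
    (P - P') * (P + P' + Q * R) + (Q - Q') * ((Q + Q') * R + R\<^sup>2 + P' * R)
    + (R - R') * (Q'\<^sup>2 + Q' * (R + R') + P' * Q')"
  unfolding gfun_def by (simp add: algebra_simps power2_eq_square)

lemma gfun_diff_in_ideal_poly:
  assumes "P \<in> Rm_poly m" "Q \<in> Rm_poly m" "R \<in> Rm_poly m"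
    and "P' \<in> Rm_poly m" "Q' \<in> Rm_poly m" "R' \<in> Rm_poly m"
    and "P - P' \<in> ideal_poly m S" "Q - Q' \<in> ideal_poly m S" "R - R' \<in> ideal_poly m S"
  shows "gfun P Q R - gfun P' Q' R' \<in> ideal_poly m S"
  unfolding gfun_diff using assms
  by (intro ideal_poly_add ideal_poly_mult Rm_poly_add Rm_poly_mult Rm_poly_power)

lemma mem_saturate_from_reduced_arcs:
  assumes "gj m j \<in> S" "q \<in> Rm m"
    and "A \<in> Rm_poly m" "B \<in> Rm_poly m" "C \<in> Rm_poly m"
    and "arc X m - A \<in> ideal_poly m S" "arc Y m - B \<in> ideal_poly m S" "arc Z m - C \<in> ideal_poly m S"
    and "coeff (gfun A B C) j = h * q"
  shows "q \<in> saturate m (ideal_gen m S) h"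
proof -
  have "gfun (arc X m) (arc Y m) (arc Z m) - gfun A B C \<in> ideal_poly m S"
    using assms by (intro gfun_diff_in_ideal_poly arc_in_Rm_poly) auto
  then have "coeff (gfun (arc X m) (arc Y m) (arc Z m) - gfun A B C) j \<in> ideal_gen m S"
    unfolding ideal_poly_def by blast
  then have "gj m j - h * q \<in> ideal_gen m S"
    using assms(9) by (simp add: gj_def)
  then have "h ^ 1 * q \<in> ideal_gen m S"
    using ideal_gen_diff[OF ideal_gen_gen[OF assms(1)]] by fastforce
  with assms(2) show ?thesis
    unfolding saturate_def by blast
qed

definition tail_arc :: "(nat \<Rightarrow> var) \<Rightarrow> nat \<Rightarrow> nat \<Rightarrow> 'k::comm_ring_1 mpoly poly" where
  "tail_arc V d m = (\<Sum>i\<le>m - d. monom (Var (V (i + d))) i)"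

lemma coeff_tail_arc: "coeff (tail_arc V d m) i = (if i \<le> m - d then Var (V (i + d)) else 0)"
  by (simp add: tail_arc_def coeff_sum)

lemma coeff_tail_arc_0: "coeff (tail_arc V d m) 0 = Var (V d)"
  by (simp add: coeff_tail_arc)

lemma coeff_tail_arc_1: "d < m \<Longrightarrow> coeff (tail_arc V d m) (Suc 0) = Var (V (Suc d))"
  by (simp add: coeff_tail_arc)

lemma tail_arc_in_Rm_poly: "V \<in> {X, Y, Z} \<Longrightarrow> d \<le> m \<Longrightarrow> tail_arc V d m \<in> Rm_poly m"
  unfolding tail_arc_def by (auto intro!: Rm_poly_monom_sum Rm_Var)

lemma shifted_tail_arc_in_Rm_poly:
  "V \<in> {X, Y, Z} \<Longrightarrow> d \<le> m \<Longrightarrow> monom 1 d * tail_arc V d m \<in> Rm_poly m"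
  by (intro Rm_poly_mult Rm_poly_monom tail_arc_in_Rm_poly Rm_one)

lemma monom_sum_split:
  fixes c :: "nat \<Rightarrow> 'a::comm_ring_1"
  assumes "d \<le> n"
  shows "(\<Sum>i\<le>n. monom (c i) i) = (\<Sum>i<d. monom (c i) i) + monom 1 d * (\<Sum>i\<le>n - d. monom (c (i + d)) i)"
proof (rule poly_eqI)
  fix j
  show "coeff (\<Sum>i\<le>n. monom (c i) i) j =
      coeff ((\<Sum>i<d. monom (c i) i) + monom 1 d * (\<Sum>i\<le>n - d. monom (c (i + d)) i)) j"
    using assms by (auto simp: coeff_sum coeff_monom_mult)
qed

lemma arc_minus_shifted_tail_arc:
  assumes "d \<le> m" "\<And>i. i < d \<Longrightarrow> Var (V i) \<in> S"
  shows "arc V m - monom 1 d * tail_arc V d m \<in> ideal_poly m S"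
proof -
  have eq: "arc V m - monom 1 d * tail_arc V d m = (\<Sum>i<d. monom (Var (V i)) i)"
    using monom_sum_split[OF assms(1), of "\<lambda>i. Var (V i)"] by (simp add: arc_def tail_arc_def diff_eq_eq)
  show ?thesis
    unfolding eq by (rule ideal_poly_monom_sum) (simp add: assms(2) ideal_gen_gen)
qed

section \<open>Low coefficients of \<open>g\<close> along arcs of positive order\<close>

text \<open>Modulo \<open>J\<^sup>2\<close> the generic arcs become \<open>(t\<^sup>2 A, t B, t\<^sup>2 C)\<close>; modulo \<open>J\<^sup>1\<close> the same with \<open>y\<close>
  and \<open>z\<close> exchanged; modulo \<open>J\<^sup>3\<close> they become \<open>(t\<^sup>2 A, t B, t\<^sup>2 D - t B)\<close>, as \<open>z\<^sub>1 \<equiv> -y\<^sub>1\<close>.\<close>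

lemma coeff_mult_1: "coeff (p * q) 1 = coeff p 0 * coeff q 1 + coeff p 1 * coeff q 0"
  by (simp add: coeff_mult)

lemma coeff_gfun_orders_2_2_2:
  fixes A B C :: "'r::comm_ring_1 poly"
  shows "coeff (gfun (monom 1 2 * A) (monom 1 2 * B) (monom 1 2 * C)) 4 = coeff A 0 ^ 2"
proof -
  have "gfun (t\<^sup>2 * A) (t\<^sup>2 * B) (t\<^sup>2 * C) = t ^ 4 * (A\<^sup>2 + t\<^sup>2 * (B * C * (A + B + C)))" for t
    by (simp add: gfun_def algebra_simps power2_eq_square power4_eq_xxxx)
  from this[of "monom 1 1"]
  have "gfun (monom 1 2 * A) (monom 1 2 * B) (monom 1 2 * C)
      = monom 1 4 * (A\<^sup>2 + monom 1 2 * (B * C * (A + B + C)))"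
    by (simp only: monom_power power_one mult_1)
  then show ?thesis
    by (simp add: coeff_monom_mult power2_eq_square coeff_mult_0)
qed

lemma coeff_gfun_orders_2_1_2:
  fixes A B C :: "'r::comm_ring_1 poly"
  assumes "(2 :: 'r) = 0"
  shows "coeff (gfun (monom 1 2 * A) (monom 1 1 * B) (monom 1 2 * C)) 5
    = coeff B 0 * (coeff B 0 * coeff C 1 + coeff C 0 * (coeff A 0 + coeff C 0))"
proof -
  have "gfun (t\<^sup>2 * A) (t * B) (t\<^sup>2 * C) = t ^ 4 * (A\<^sup>2 + B\<^sup>2 * C + t * (B * C * (A + C)))" for t
    by (simp add: gfun_def algebra_simps power2_eq_square power4_eq_xxxx)
  from this[of "monom 1 1"]
  have "gfun (monom 1 2 * A) (monom 1 1 * B) (monom 1 2 * C)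
      = monom 1 4 * (A\<^sup>2 + B\<^sup>2 * C + monom 1 1 * (B * C * (A + C)))"
    by (simp only: monom_power power_one mult_1 power_one_right)
  then have "coeff (gfun (monom 1 2 * A) (monom 1 1 * B) (monom 1 2 * C)) 5
      = coeff (A\<^sup>2 + B\<^sup>2 * C + monom 1 1 * (B * C * (A + C))) 1"
    by (simp add: coeff_monom_mult)
  also have "\<dots> = 2 * (coeff A 0 * coeff A 1 + coeff B 0 * coeff B 1 * coeff C 0)
      + coeff B 0 * (coeff B 0 * coeff C 1 + coeff C 0 * (coeff A 0 + coeff C 0))"
    by (simp only: coeff_add coeff_mult_1 coeff_mult_0 power2_eq_square)
      (simp add: coeff_monom_mult algebra_simps)
  finally show ?thesis
    using assms by simp
qed

lemma coeff_gfun_orders_2_1_1_cancelling: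
  fixes A B D :: "'r::comm_ring_1 poly"
  assumes "(2 :: 'r) = 0"
  shows "coeff (gfun (monom 1 2 * A) (monom 1 1 * B) (monom 1 2 * D - monom 1 1 * B)) 5
    = coeff B 0 * (coeff D 0 * (coeff A 0 + coeff D 0) - coeff B 0 * (coeff A 1 + coeff D 1))"
proof -
  have "gfun (t\<^sup>2 * A) (t * B) (t\<^sup>2 * D - t * B) = t ^ 4 * (A\<^sup>2 + B * (t * D - B) * (A + D))" for t
    by (simp add: gfun_def algebra_simps power2_eq_square power4_eq_xxxx)
  from this[of "monom 1 1"]
  have "gfun (monom 1 2 * A) (monom 1 1 * B) (monom 1 2 * D - monom 1 1 * B)
      = monom 1 4 * (A\<^sup>2 + B * (monom 1 1 * D - B) * (A + D))"
    by (simp only: monom_power power_one mult_1 power_one_right)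
  then have "coeff (gfun (monom 1 2 * A) (monom 1 1 * B) (monom 1 2 * D - monom 1 1 * B)) 5
      = coeff (A\<^sup>2 + B * (monom 1 1 * D - B) * (A + D)) 1"
    by (simp add: coeff_monom_mult)
  also have "\<dots> = 2 * (coeff A 0 * coeff A 1 - coeff B 0 * coeff B 1 * (coeff A 0 + coeff D 0))
      + coeff B 0 * (coeff D 0 * (coeff A 0 + coeff D 0) - coeff B 0 * (coeff A 1 + coeff D 1))"
    by (simp only: coeff_add coeff_diff coeff_mult_1 coeff_mult_0 power2_eq_square)
      (simp add: coeff_monom_mult algebra_simps)
  finally show ?thesis
    using assms by simp
qed

section \<open>Elements of the saturated ideals\<close>

lemma mpoly_two_eq_zero: "(2 :: 'k::comm_ring_1) = 0 \<Longrightarrow> (2 :: 'k mpoly) = 0"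
  by (metis single_numeral single_zero)

lemma gfun_swap: "gfun x y z = gfun x z y"
  by (simp add: gfun_def algebra_simps)

definition q1 :: "'k::comm_ring_1 mpoly" where
  "q1 = Var (Z 1) * Var (Y 3) + Var (Y 2) * (Var (X 2) + Var (Y 2))"

definition q2 :: "'k::comm_ring_1 mpoly" where
  "q2 = Var (Y 1) * Var (Z 3) + Var (Z 2) * (Var (X 2) + Var (Z 2))"

definition q3 :: "'k::comm_ring_1 mpoly" where
  "q3 = (Var (Y 2) + Var (Z 2)) * (Var (X 2) + Var (Y 2) + Var (Z 2))
      - Var (Y 1) * (Var (X 3) + Var (Y 3) + Var (Z 3))"

lemma q1_in_Iset:
  assumes "(2 :: 'k::comm_ring_1) = 0" "m \<ge> 5"
  shows "(q1 :: 'k mpoly) \<in> Iset m 1"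
proof -
  let ?S = "{Var (X 0), Var (X 1), Var (Y 0), Var (Y 1), Var (Z 0)} \<union> gens_g m :: 'k mpoly set"
  let ?A = "monom 1 2 * tail_arc X 2 m" and ?B = "monom 1 2 * tail_arc Y 2 m"
    and ?C = "monom 1 1 * tail_arc Z 1 m"
  have "coeff (gfun ?A ?B ?C) 5 = Var (Z 1) * (q1 :: 'k mpoly)"
    using assms(2)
    by (subst gfun_swap, subst coeff_gfun_orders_2_1_2)
      (simp_all add: mpoly_two_eq_zero[OF assms(1)] coeff_tail_arc_0 coeff_tail_arc_1 q1_def)
  then have "q1 \<in> saturate m (ideal_gen m ?S) (Var (Z 1))"
    using assms(2)
    by (intro mem_saturate_from_reduced_arcs[where A = ?A and B = ?B and C = ?C]
        arc_minus_shifted_tail_arc shifted_tail_arc_in_Rm_poly)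
      (auto simp: gens_g_def q1_def less_Suc_eq numeral_2_eq_2 intro!: Rm_add Rm_mult Rm_Var)
  then show ?thesis
    by (simp add: Iset_def J1_def)
qed

lemma q2_in_Iset:
  assumes "(2 :: 'k::comm_ring_1) = 0" "m \<ge> 5"
  shows "(q2 :: 'k mpoly) \<in> Iset m 2"
proof -
  let ?S = "{Var (X 0), Var (X 1), Var (Y 0), Var (Z 0), Var (Z 1)} \<union> gens_g m :: 'k mpoly set"
  let ?A = "monom 1 2 * tail_arc X 2 m" and ?B = "monom 1 1 * tail_arc Y 1 m"
    and ?C = "monom 1 2 * tail_arc Z 2 m"
  have "coeff (gfun ?A ?B ?C) 5 = Var (Y 1) * (q2 :: 'k mpoly)"
    using assms(2)
    by (subst coeff_gfun_orders_2_1_2)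
      (simp_all add: mpoly_two_eq_zero[OF assms(1)] coeff_tail_arc_0 coeff_tail_arc_1 q2_def)
  then have "q2 \<in> saturate m (ideal_gen m ?S) (Var (Y 1))"
    using assms(2)
    by (intro mem_saturate_from_reduced_arcs[where A = ?A and B = ?B and C = ?C]
        arc_minus_shifted_tail_arc shifted_tail_arc_in_Rm_poly)
      (auto simp: gens_g_def q2_def less_Suc_eq numeral_2_eq_2 intro!: Rm_add Rm_mult Rm_Var)
  then show ?thesis
    by (simp add: Iset_def J2_def)
qed

lemma q3_in_Iset:
  assumes "(2 :: 'k::comm_ring_1) = 0" "m \<ge> 5"
  shows "(q3 :: 'k mpoly) \<in> Iset m 3"
proof -
  let ?S = "{Var (X 0), Var (X 1), Var (Y 0), Var (Z 0), Var (Y 1) + Var (Z 1)} \<union> gens_g m :: 'k mpoly set"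
  let ?D = "tail_arc Y 2 m + tail_arc Z 2 m"
  let ?A = "monom 1 2 * tail_arc X 2 m" and ?B = "monom 1 1 * tail_arc Y 1 m"
    and ?C = "monom 1 2 * ?D - monom 1 1 * tail_arc Y 1 m"
  have "coeff (gfun ?A ?B ?C) 5 = Var (Y 1) * (q3 :: 'k mpoly)"
    using assms(2)
    by (subst coeff_gfun_orders_2_1_1_cancelling)
      (simp_all add: mpoly_two_eq_zero[OF assms(1)] coeff_tail_arc_0 coeff_tail_arc_1 q3_def algebra_simps)
  moreover have "?C \<in> Rm_poly m"
    using assms(2) by (intro Rm_poly_diff Rm_poly_mult Rm_poly_add Rm_poly_monom tail_arc_in_Rm_poly) auto
  moreover have "arc Z m - ?C \<in> ideal_poly m ?S"
    unfolding ideal_poly_def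
  proof (intro CollectI allI)
    fix n :: nat
    have "2 \<le> n \<Longrightarrow> Suc (Suc (n - 2)) = n"
      by arith
    then have coeff_eq: "coeff (arc Z m - ?C) n =
        (if n = 0 then Var (Z 0) else if n = 1 then Var (Y 1) + Var (Z 1) else 0)"
      using assms(2) by (auto simp: arc_def coeff_sum coeff_tail_arc coeff_monom_mult)
    show "coeff (arc Z m - ?C) n \<in> ideal_gen m ?S"
      unfolding coeff_eq by (auto intro: ideal_gen_gen ideal_gen_zero)
  qed
  ultimately have "q3 \<in> saturate m (ideal_gen m ?S) (Var (Y 1))"
    using assms(2)
    by (intro mem_saturate_from_reduced_arcs[where A = ?A and B = ?B and C = ?C]
        arc_minus_shifted_tail_arc shifted_tail_arc_in_Rm_poly)
      (auto simp: gens_g_def q3_def less_Suc_eq numeral_2_eq_2 intro!: Rm_add Rm_diff Rm_mult Rm_Var)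
  then show ?thesis
    by (simp add: Iset_def J3_def)
qed

section \<open>Points of \<open>(\<bbbA>\<^sup>3)\<^sub>m\<close> given by arcs\<close>

definition arc_point :: "'k::zero poly \<Rightarrow> 'k poly \<Rightarrow> 'k poly \<Rightarrow> var \<Rightarrow> 'k" where
  "arc_point P Q R v = (case v of X i \<Rightarrow> coeff P i | Y i \<Rightarrow> coeff Q i | Z i \<Rightarrow> coeff R i)"

lemma arc_point_in_points:
  "degree P \<le> m \<Longrightarrow> degree Q \<le> m \<Longrightarrow> degree R \<le> m \<Longrightarrow> arc_point P Q R \<in> points m"
  unfolding points_def arc_point_def by (auto split: var.split intro!: coeff_eq_0)

lemma eval_gj_arc_point:
  "degree P \<le> m \<Longrightarrow> degree Q \<le> m \<Longrightarrow> degree R \<le> m \<Longrightarrow>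
    eval (gj m j) (arc_point P Q R) = coeff (gfun P Q R) j"
  by (simp add: eval_gj arc_point_def poly_as_sum_of_monoms')

lemma eval_on_line_is_poly: "\<exists>Q. \<forall>s. eval p (\<lambda>v. a v + s * d v) = poly Q (s :: 'k::comm_ring_1)"
proof
  show "\<forall>s. eval p (\<lambda>v. a v + s * d v) = poly (\<Sum>mo\<in>Poly_Mapping.keys p. [:Poly_Mapping.lookup p mo:] *
      (\<Prod>v\<in>Poly_Mapping.keys mo. [:a v, d v:] ^ Poly_Mapping.lookup mo v)) s"
    by (simp add: eval_def poly_sum poly_prod poly_power algebra_simps)
qed

lemma alg_closed_infinite:
  assumes "alg_closed TYPE('k::field)"
  shows "infinite (UNIV :: 'k set)"
proof
  assume fin: "finite (UNIV :: 'k set)"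
  define P :: "'k poly" where "P = 1 + (\<Prod>a\<in>UNIV. [:- a, 1:])"
  have "degree P = card (UNIV :: 'k set)"
    unfolding P_def using fin
    by (subst degree_add_eq_right) (auto simp: degree_prod_sum_eq finite_UNIV_card_ge_0)
  then have "degree P > 0"
    using fin finite_UNIV_card_ge_0 by simp
  then obtain x where "poly P x = 0"
    using assms unfolding alg_closed_def by blast
  moreover have "poly (\<Prod>a\<in>UNIV. [:- a, 1:]) x = 0"
    unfolding poly_prod using fin by (intro prod_zero) auto
  ultimately show False
    unfolding P_def by simp
qed

text \<open>Along the line, an element of the saturation is a polynomial in \<open>s\<close> that vanishes for all
  \<open>s \<noteq> 0\<close>, since there \<open>J\<close> vanishes and \<open>h\<close> does not.\<close>
lemma saturate_vanishes_on_line: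
  fixes a d :: "var \<Rightarrow> 'k::field"
  assumes "infinite (UNIV :: 'k set)" "p \<in> saturate m J h"
    and "\<And>s r. s \<noteq> 0 \<Longrightarrow> r \<in> J \<Longrightarrow> eval r (\<lambda>v. a v + s * d v) = 0"
    and "\<And>s. s \<noteq> 0 \<Longrightarrow> eval h (\<lambda>v. a v + s * d v) \<noteq> 0"
  shows "eval p a = 0"
proof -
  obtain n where n: "h ^ n * p \<in> J"
    using assms(2) unfolding saturate_def by blast
  obtain Q where Q: "\<And>s. eval p (\<lambda>v. a v + s * d v) = poly Q s"
    using eval_on_line_is_poly by blast
  have "UNIV - {0} \<subseteq> {s. poly Q s = 0}"
    using assms(3)[OF _ n] assms(4) by (auto simp: eval_mult eval_power simp flip: Q)
  then have "Q = 0"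
    using assms(1) poly_roots_finite[of Q] finite_subset by fastforce
  then show ?thesis
    using Q[of 0] by simp
qed

definition yz_arc_point :: "'k::comm_ring_1 \<Rightarrow> 'k \<Rightarrow> 'k \<Rightarrow> var \<Rightarrow> 'k" where
  "yz_arc_point b c s = arc_point 0 (smult b [:0, s, 1:]) (smult c [:0, s, 1:])"

lemma yz_arc_point_line:
  "yz_arc_point b c s = (\<lambda>v. yz_arc_point b c 0 v + s * arc_point 0 [:0, b:] [:0, c:] v)"
  by (auto simp: yz_arc_point_def arc_point_def coeff_pCons fun_eq_iff split: var.split nat.split)

lemma yz_arc_point_coordinates:
  "yz_arc_point b c s (X i) = 0"
  "yz_arc_point b c s (Y i) = b * coeff [:0, s, 1:] i"
  "yz_arc_point b c s (Z i) = c * coeff [:0, s, 1:] i"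
  by (simp_all add: yz_arc_point_def arc_point_def del: smult_pCons)

lemma yz_arc_point_at_0: "yz_arc_point b c 0 = (\<lambda>v. if v = Y 2 then b else if v = Z 2 then c else 0)"
  by (auto simp: yz_arc_point_def arc_point_def fun_eq_iff coeff_pCons numeral_2_eq_2
      split: var.split nat.split)

lemma yz_arc_point_in_points: "m \<ge> 2 \<Longrightarrow> yz_arc_point b c s \<in> points m"
  unfolding yz_arc_point_def by (rule arc_point_in_points) (auto intro: order.trans[OF degree_smult_le])

lemma gfun_zero_smult: "gfun 0 (smult b u) (smult c u) = smult (b * c * (b + c)) (u ^ 3)"
  by (simp add: gfun_def algebra_simps power2_eq_square power3_eq_cube smult_add_left)

lemma eval_gj_yz_arc_point:
  assumes "m \<ge> 2"
  shows "eval (gj m j) (yz_arc_point b c s) = b * c * (b + c) * coeff ([:0, s, 1:] ^ 3) j"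
proof -
  have "eval (gj m j) (yz_arc_point b c s) = coeff (gfun 0 (smult b [:0, s, 1:]) (smult c [:0, s, 1:])) j"
    unfolding yz_arc_point_def using assms
    by (intro eval_gj_arc_point) (auto intro: order.trans[OF degree_smult_le])
  then show ?thesis
    by (simp only: gfun_zero_smult coeff_smult)
qed

lemma yz_arc_point_in_Zc0:
  assumes "m \<ge> 2" "b * c * (b + c) = 0"
  shows "yz_arc_point b c 0 \<in> Zc m 0"
proof -
  have "\<forall>v \<in> {X 0, X 1, X 2, Y 0, Y 1, Z 0, Z 1}. yz_arc_point b c 0 v = 0"
    by (simp add: yz_arc_point_def arc_point_def)
  then show ?thesis
    unfolding Zc_eq I0_def mem_zero_set_ideal_gen
    using assms by (auto simp: yz_arc_point_in_points eval_gj_yz_arc_point gens_g_def)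
qed

lemma yz_arc_point_in_zero_set_saturate:
  assumes "infinite (UNIV :: 'k::field set)" "m \<ge> 2"
    and "\<And>s r. s \<noteq> 0 \<Longrightarrow> r \<in> S \<Longrightarrow> eval r (yz_arc_point b c s) = (0 :: 'k)"
    and "\<And>s. s \<noteq> 0 \<Longrightarrow> eval h (yz_arc_point b c s) \<noteq> 0"
  shows "yz_arc_point b c 0 \<in> zero_set m (saturate m (ideal_gen m S) h)"
  unfolding zero_set_def
proof (intro CollectI conjI ballI)
  show "yz_arc_point b c 0 \<in> points m"
    using assms(2) by (rule yz_arc_point_in_points)
  fix p assume "p \<in> saturate m (ideal_gen m S) h"
  then show "eval p (yz_arc_point b c 0) = 0"
  proof (rule saturate_vanishes_on_line[OF assms(1), where d = "arc_point 0 [:0, b:] [:0, c:]"])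
    fix s :: 'k and r assume "s \<noteq> 0" "r \<in> ideal_gen m S"
    then show "eval r (\<lambda>v. yz_arc_point b c 0 v + s * arc_point 0 [:0, b:] [:0, c:] v) = 0"
      unfolding yz_arc_point_line[symmetric] by (auto elim!: eval_ideal_gen intro: assms(3))
  next
    fix s :: 'k assume "s \<noteq> 0"
    then show "eval h (\<lambda>v. yz_arc_point b c 0 v + s * arc_point 0 [:0, b:] [:0, c:] v) \<noteq> 0"
      unfolding yz_arc_point_line[symmetric] by (rule assms(4))
  qed
qed

lemma gens_g_subset_Rm: "gens_g m \<subseteq> (Rm m :: 'k::comm_ring_1 mpoly set)"
  using gj_in_Rm by (auto simp: gens_g_def)

lemma Zc_subset_zero_set_J:
  assumes "m \<ge> 1"
  shows "Zc m 1 \<subseteq> zero_set m (J1 m :: 'k::comm_ring_1 mpoly set)"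
    and "Zc m 2 \<subseteq> zero_set m (J2 m :: 'k mpoly set)"
    and "Zc m 3 \<subseteq> zero_set m (J3 m :: 'k mpoly set)"
  unfolding Zc_eq J1_def J2_def J3_def
  using assms gens_g_subset_Rm
  by (auto intro!: zero_set_saturate_subset Rm_add Rm_Var)

lemma eval_gj4_if_low_coordinates_vanish:
  assumes "m \<ge> 2" "\<forall>v \<in> {X 0, X 1, Y 0, Y 1, Z 0, Z 1}. a v = 0"
  shows "eval (gj m 4) a = (a (X 2) :: 'k::comm_ring_1) ^ 2"
proof -
  have shift: "(\<Sum>i\<le>m. monom (c i) i) = monom 1 2 * (\<Sum>i\<le>m - 2. monom (c (i + 2)) i)"
    if "c 0 = 0" "c 1 = 0" for c :: "nat \<Rightarrow> 'k"
    using monom_sum_split[OF assms(1), of c] that by (simp add: numeral_2_eq_2 lessThan_Suc)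
  have "eval (gj m 4) a = coeff (gfun
      (monom 1 2 * (\<Sum>i\<le>m - 2. monom (a (X (i + 2))) i))
      (monom 1 2 * (\<Sum>i\<le>m - 2. monom (a (Y (i + 2))) i))
      (monom 1 2 * (\<Sum>i\<le>m - 2. monom (a (Z (i + 2))) i))) 4"
    unfolding eval_gj using assms(2) by (subst (1 2 3) shift) auto
  then show ?thesis
    by (simp only: coeff_gfun_orders_2_2_2) (simp add: coeff_sum numeral_2_eq_2)
qed

lemma in_Zc0_if_low_coordinates_vanish:
  assumes "m \<ge> 4" "a \<in> points m" "\<forall>v \<in> {X 0, X 1, Y 0, Y 1, Z 0, Z 1}. a v = 0"
    and "\<forall>j \<le> m. eval (gj m j) a = (0 :: 'k::field)"
  shows "a \<in> Zc m 0"
proof -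
  have "a (X 2) = 0"
    using assms eval_gj4_if_low_coordinates_vanish[of m a] by simp
  then show ?thesis
    using assms unfolding Zc_eq I0_def mem_zero_set_ideal_gen by (auto simp: gens_g_def)
qed

lemma Zc_pairwise_inter_subset_Zc0:
  assumes "m \<ge> 5"
  shows "Zc m 1 \<inter> Zc m 2 \<subseteq> (Zc m 0 :: (var \<Rightarrow> 'k::field) set)"
    and "Zc m 2 \<inter> Zc m 3 \<subseteq> (Zc m 0 :: (var \<Rightarrow> 'k) set)"
    and "Zc m 3 \<inter> Zc m 1 \<subseteq> (Zc m 0 :: (var \<Rightarrow> 'k) set)"
proof -
  have J1: "a \<in> points m \<and> (\<forall>j \<le> m. eval (gj m j) a = 0) \<and> (\<forall>v \<in> {X 0, X 1, Y 0, Y 1, Z 0}. a v = 0)"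
    if "a \<in> Zc m 1" for a :: "var \<Rightarrow> 'k"
    using subsetD[OF Zc_subset_zero_set_J(1) that] assms
    unfolding J1_def mem_zero_set_ideal_gen by (auto simp: gens_g_def)
  have J2: "a \<in> points m \<and> (\<forall>j \<le> m. eval (gj m j) a = 0) \<and> (\<forall>v \<in> {X 0, X 1, Y 0, Z 0, Z 1}. a v = 0)"
    if "a \<in> Zc m 2" for a :: "var \<Rightarrow> 'k"
    using subsetD[OF Zc_subset_zero_set_J(2) that] assms
    unfolding J2_def mem_zero_set_ideal_gen by (auto simp: gens_g_def)
  have J3: "a \<in> points m \<and> (\<forall>j \<le> m. eval (gj m j) a = 0) \<and> (\<forall>v \<in> {X 0, X 1, Y 0, Z 0}. a v = 0)
      \<and> a (Y 1) + a (Z 1) = 0"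
    if "a \<in> Zc m 3" for a :: "var \<Rightarrow> 'k"
    using subsetD[OF Zc_subset_zero_set_J(3) that] assms
    unfolding J3_def mem_zero_set_ideal_gen by (auto simp: gens_g_def eval_add)
  show "Zc m 1 \<inter> Zc m 2 \<subseteq> (Zc m 0 :: (var \<Rightarrow> 'k) set)"
  proof
    fix a :: "var \<Rightarrow> 'k" assume "a \<in> Zc m 1 \<inter> Zc m 2"
    then show "a \<in> Zc m 0"
      using J1[of a] J2[of a] assms by (intro in_Zc0_if_low_coordinates_vanish) auto
  qed
  show "Zc m 2 \<inter> Zc m 3 \<subseteq> (Zc m 0 :: (var \<Rightarrow> 'k) set)"
  proof
    fix a :: "var \<Rightarrow> 'k" assume "a \<in> Zc m 2 \<inter> Zc m 3"
    then show "a \<in> Zc m 0"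
      using J2[of a] J3[of a] assms by (intro in_Zc0_if_low_coordinates_vanish) auto
  qed
  show "Zc m 3 \<inter> Zc m 1 \<subseteq> (Zc m 0 :: (var \<Rightarrow> 'k) set)"
  proof
    fix a :: "var \<Rightarrow> 'k" assume "a \<in> Zc m 3 \<inter> Zc m 1"
    then show "a \<in> Zc m 0"
      using J3[of a] J1[of a] assms by (intro in_Zc0_if_low_coordinates_vanish) auto
  qed
qed

lemma not_in_Zc_if_eval_nonzero: "q \<in> Iset m i \<Longrightarrow> eval q a \<noteq> 0 \<Longrightarrow> a \<notin> Zc m i"
  unfolding Zc_def zero_set_def by auto

lemma witnesses_Zc1:
  assumes "infinite (UNIV :: 'k::field set)" "(2 :: 'k) = 0" "m \<ge> 5"
  shows "yz_arc_point 0 1 (0 :: 'k) \<in> Zc m 0" "yz_arc_point 0 1 (0 :: 'k) \<in> Zc m 1"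
    and "yz_arc_point 0 1 (0 :: 'k) \<notin> Zc m 2" "yz_arc_point 0 1 (0 :: 'k) \<notin> Zc m 3"
proof -
  show "yz_arc_point 0 1 (0 :: 'k) \<in> Zc m 0"
    using assms by (intro yz_arc_point_in_Zc0) auto
  show "yz_arc_point 0 1 (0 :: 'k) \<in> Zc m 1"
    unfolding Zc_eq J1_def using assms
    by (intro yz_arc_point_in_zero_set_saturate)
      (auto simp: gens_g_def eval_gj_yz_arc_point yz_arc_point_coordinates)
  show "yz_arc_point 0 1 (0 :: 'k) \<notin> Zc m 2"
    by (rule not_in_Zc_if_eval_nonzero[OF q2_in_Iset[OF assms(2,3)]])
      (simp add: q2_def eval_add eval_diff eval_mult yz_arc_point_at_0)
  show "yz_arc_point 0 1 (0 :: 'k) \<notin> Zc m 3"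
    by (rule not_in_Zc_if_eval_nonzero[OF q3_in_Iset[OF assms(2,3)]])
      (simp add: q3_def eval_add eval_diff eval_mult yz_arc_point_at_0)
qed

lemma witnesses_Zc2:
  assumes "infinite (UNIV :: 'k::field set)" "(2 :: 'k) = 0" "m \<ge> 5"
  shows "yz_arc_point 1 0 (0 :: 'k) \<in> Zc m 0" "yz_arc_point 1 0 (0 :: 'k) \<in> Zc m 2"
    and "yz_arc_point 1 0 (0 :: 'k) \<notin> Zc m 1" "yz_arc_point 1 0 (0 :: 'k) \<notin> Zc m 3"
proof -
  show "yz_arc_point 1 0 (0 :: 'k) \<in> Zc m 0"
    using assms by (intro yz_arc_point_in_Zc0) auto
  show "yz_arc_point 1 0 (0 :: 'k) \<in> Zc m 2"
    unfolding Zc_eq J2_def using assms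
    by (intro yz_arc_point_in_zero_set_saturate)
      (auto simp: gens_g_def eval_gj_yz_arc_point yz_arc_point_coordinates)
  show "yz_arc_point 1 0 (0 :: 'k) \<notin> Zc m 1"
    by (rule not_in_Zc_if_eval_nonzero[OF q1_in_Iset[OF assms(2,3)]])
      (simp add: q1_def eval_add eval_diff eval_mult yz_arc_point_at_0)
  show "yz_arc_point 1 0 (0 :: 'k) \<notin> Zc m 3"
    by (rule not_in_Zc_if_eval_nonzero[OF q3_in_Iset[OF assms(2,3)]])
      (simp add: q3_def eval_add eval_diff eval_mult yz_arc_point_at_0)
qed

lemma witnesses_Zc3:
  assumes "infinite (UNIV :: 'k::field set)" "(2 :: 'k) = 0" "m \<ge> 5"
  shows "yz_arc_point 1 1 (0 :: 'k) \<in> Zc m 0" "yz_arc_point 1 1 (0 :: 'k) \<in> Zc m 3"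
    and "yz_arc_point 1 1 (0 :: 'k) \<notin> Zc m 1" "yz_arc_point 1 1 (0 :: 'k) \<notin> Zc m 2"
proof -
  show "yz_arc_point 1 1 (0 :: 'k) \<in> Zc m 0"
    using assms by (intro yz_arc_point_in_Zc0) auto
  show "yz_arc_point 1 1 (0 :: 'k) \<in> Zc m 3"
    unfolding Zc_eq J3_def using assms
    by (intro yz_arc_point_in_zero_set_saturate)
      (auto simp: gens_g_def eval_gj_yz_arc_point eval_add yz_arc_point_coordinates mult_2[symmetric])
  show "yz_arc_point 1 1 (0 :: 'k) \<notin> Zc m 1"
    by (rule not_in_Zc_if_eval_nonzero[OF q1_in_Iset[OF assms(2,3)]])
      (simp add: q1_def eval_add eval_diff eval_mult yz_arc_point_at_0)
  show "yz_arc_point 1 1 (0 :: 'k) \<notin> Zc m 2"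
    by (rule not_in_Zc_if_eval_nonzero[OF q2_in_Iset[OF assms(2,3)]])
      (simp add: q2_def eval_add eval_diff eval_mult yz_arc_point_at_0)
qed

lemma distinct_pairs_le_3:
  "{(i, j). i \<le> 3 \<and> j \<le> (3::nat) \<and> i \<noteq> j} =
    {(0, 1), (1, 0), (0, 2), (2, 0), (0, 3), (3, 0), (1, 2), (2, 1), (2, 3), (3, 2), (1, 3), (3, 1)}"
  by (auto simp: numeral_3_eq_3 numeral_2_eq_2 le_Suc_eq)

lemma pairwise_intersections_le_3:
  fixes A :: "nat \<Rightarrow> 'a set"
  shows "{A i \<inter> A j | i j. i \<le> 3 \<and> j \<le> 3 \<and> i \<noteq> j} =
    {A 0 \<inter> A 1, A 0 \<inter> A 2, A 0 \<inter> A 3, A 1 \<inter> A 2, A 2 \<inter> A 3, A 3 \<inter> A 1}"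
proof -
  have "{A i \<inter> A j | i j. i \<le> 3 \<and> j \<le> 3 \<and> i \<noteq> j} =
      (\<lambda>(i, j). A i \<inter> A j) ` {(i, j). i \<le> 3 \<and> j \<le> (3::nat) \<and> i \<noteq> j}"
    by auto
  then show ?thesis
    unfolding distinct_pairs_le_3 by (auto simp: Int_commute)
qed

lemma maximal_elementsI_witness:
  "B \<in> F \<Longrightarrow> p \<in> B \<Longrightarrow> (\<And>B'. B' \<in> F \<Longrightarrow> p \<in> B' \<Longrightarrow> B' = B) \<Longrightarrow> B \<in> maximal_elements F"
  unfolding maximal_elements_def by blast

lemma not_maximal_elements_psubset: "B' \<in> F \<Longrightarrow> B \<subset> B' \<Longrightarrow> B \<notin> maximal_elements F"
  unfolding maximal_elements_def by blast

lemma maximal_pairwise_intersections: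
  fixes A :: "nat \<Rightarrow> 'a set"
  assumes sub: "A 1 \<inter> A 2 \<subseteq> A 0" "A 2 \<inter> A 3 \<subseteq> A 0" "A 3 \<inter> A 1 \<subseteq> A 0"
    and w1: "p1 \<in> A 0" "p1 \<in> A 1" "p1 \<notin> A 2" "p1 \<notin> A 3"
    and w2: "p2 \<in> A 0" "p2 \<in> A 2" "p2 \<notin> A 1" "p2 \<notin> A 3"
    and w3: "p3 \<in> A 0" "p3 \<in> A 3" "p3 \<notin> A 1" "p3 \<notin> A 2"
  shows "maximal_elements {A i \<inter> A j | i j. i \<le> 3 \<and> j \<le> 3 \<and> i \<noteq> j}
           = {A 0 \<inter> A 1, A 0 \<inter> A 2, A 0 \<inter> A 3}
    \<and> A 0 \<inter> A 1 \<noteq> A 0 \<inter> A 2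
    \<and> A 0 \<inter> A 2 \<noteq> A 0 \<inter> A 3
    \<and> A 0 \<inter> A 1 \<noteq> A 0 \<inter> A 3
    \<and> A 1 \<inter> A 2 \<subset> A 0
    \<and> A 2 \<inter> A 3 \<subset> A 0
    \<and> A 3 \<inter> A 1 \<subset> A 0"
proof -
  let ?M = "{A 0 \<inter> A 1, A 0 \<inter> A 2, A 0 \<inter> A 3}"
  let ?F = "?M \<union> {A 1 \<inter> A 2, A 2 \<inter> A 3, A 3 \<inter> A 1}"
  have psub: "A 1 \<inter> A 2 \<subset> A 0 \<inter> A 1" "A 2 \<inter> A 3 \<subset> A 0 \<inter> A 2" "A 3 \<inter> A 1 \<subset> A 0 \<inter> A 3"
    using sub w1 w2 w3 by blast+
  have "A 0 \<inter> A 1 \<in> maximal_elements ?F"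
    by (rule maximal_elementsI_witness[of _ _ p1]) (use w1 in auto)
  moreover have "A 0 \<inter> A 2 \<in> maximal_elements ?F"
    by (rule maximal_elementsI_witness[of _ _ p2]) (use w2 in auto)
  moreover have "A 0 \<inter> A 3 \<in> maximal_elements ?F"
    by (rule maximal_elementsI_witness[of _ _ p3]) (use w3 in auto)
  moreover have "maximal_elements ?F \<subseteq> ?F"
    by (auto simp: maximal_elements_def)
  ultimately have "maximal_elements ?F = ?M"
    using not_maximal_elements_psubset[of _ ?F, OF _ psub(1)] not_maximal_elements_psubset[of _ ?F, OF _ psub(2)]
      not_maximal_elements_psubset[of _ ?F, OF _ psub(3)] by blast
  moreover have "A 0 \<inter> A 1 \<noteq> A 0 \<inter> A 2" "A 0 \<inter> A 2 \<noteq> A 0 \<inter> A 3" "A 0 \<inter> A 1 \<noteq> A 0 \<inter> A 3"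
    using w1 w2 by blast+
  moreover have "A 1 \<inter> A 2 \<subset> A 0" "A 2 \<inter> A 3 \<subset> A 0" "A 3 \<inter> A 1 \<subset> A 0"
    using psub by blast+
  moreover have "{A 0 \<inter> A 1, A 0 \<inter> A 2, A 0 \<inter> A 3, A 1 \<inter> A 2, A 2 \<inter> A 3, A 3 \<inter> A 1} = ?F"
    by auto
  ultimately show ?thesis
    unfolding pairwise_intersections_le_3 by simp
qed

theorem theorem4p13:
  fixes m :: nat
  assumes "alg_closed TYPE('k::field)"
    and "(2::'k) = 0"
    and "m \<ge> 5"
  shows "maximal_elements {(Zc m i \<inter> Zc m j :: (var \<Rightarrow> 'k) set) | i j. i \<le> 3 \<and> j \<le> 3 \<and> i \<noteq> j}
           = {Zc m 0 \<inter> Zc m 1, Zc m 0 \<inter> Zc m 2, Zc m 0 \<inter> Zc m 3}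
    \<and> Zc m 0 \<inter> Zc m 1 \<noteq> (Zc m 0 \<inter> Zc m 2 :: (var \<Rightarrow> 'k) set)
    \<and> Zc m 0 \<inter> Zc m 2 \<noteq> (Zc m 0 \<inter> Zc m 3 :: (var \<Rightarrow> 'k) set)
    \<and> Zc m 0 \<inter> Zc m 1 \<noteq> (Zc m 0 \<inter> Zc m 3 :: (var \<Rightarrow> 'k) set)
    \<and> Zc m 1 \<inter> Zc m 2 \<subset> (Zc m 0 :: (var \<Rightarrow> 'k) set)
    \<and> Zc m 2 \<inter> Zc m 3 \<subset> (Zc m 0 :: (var \<Rightarrow> 'k) set)
    \<and> Zc m 3 \<inter> Zc m 1 \<subset> (Zc m 0 :: (var \<Rightarrow> 'k) set)"
proof -
  have infinite: "infinite (UNIV :: 'k set)"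
    using assms(1) by (rule alg_closed_infinite)
  show ?thesis
    by (rule maximal_pairwise_intersections[OF Zc_pairwise_inter_subset_Zc0[OF assms(3)]
          witnesses_Zc1[OF infinite assms(2,3)] witnesses_Zc2[OF infinite assms(2,3)]
          witnesses_Zc3[OF infinite assms(2,3)]])
qed

end
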